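(* Let $d\in\{1,2\}$. There exists a constant $C>0$ such that for any $0<r<t$ and $x,z\in\mathbb R^d$, $$\int_r^t\int_{\mathbb R^d}G(t-s,x-y)G(s-r,y-z)\,dy\,ds\le Ct^2\,G(t-r,x-z).$$
   Context: $G$ is the fundamental solution of the wave equation on $\mathbb R_+\times\mathbb R^d$: $G(t,x)=\frac12 1_{\{|x|<t\}}$ if $d=1$, and $G(t,x)=\frac1{2\pi}(t^2-|x|^2)^{-1/2}1_{\{|x|<t\}}$ if $d=2$. *)

theory Defs
  imports "HOL-Analysis.Analysis"
begin

text \<open>Fundamental solution of the wave equation on R_+ x R^d, for d = DIM('a) in {1,2}.
  (Outside d in {1,2} the value is irrelevant; we set it to 0.)\<close>
definition wave_G :: "real \<Rightarrow> 'a::euclidean_space \<Rightarrow> real" where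
  "wave_G t x =
     (if norm x < t then
        (if DIM('a) = 1 then 1 / 2
         else if DIM('a) = 2 then 1 / (2 * pi) * (1 / sqrt (t\<^sup>2 - (norm x)\<^sup>2))
         else 0)
      else 0)"

end

theory Submission
  imports Defs
begin

(* The integral vanishes unless |x - z| < t - r, since the supports of the two kernels
  force |x - y| < t - s and |y - z| < s - r.  For d = 1 both kernels are at most 1/2 and
  supported in balls of radius t - r, so the integral is at most (t - r)^2 / 2.
  For d = 2 integrate first in time: for fixed y, with p = |x - y| and q = |y - z|, the
  product of the kernels lives on r + q < s < t - p and has only inverse square-root
  singularities at its endpoints, so its time integral is at most
  (t - r)^(-1/2) (p^(-1/2) + q^(-1/2)).  By the layer-cake formula, |x - y|^(-1/2) has
  integral O((t - r)^(3/2)) over a disc of radius t - r, so the whole integral is at most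
  4 pi (t - r), whereas G(t - r, x - z) >= 1 / (2 pi (t - r)). *)

lemma nn_integral_inverse_sqrt_lower:
  fixes a b :: real
  assumes "a \<le> b"
  shows "(\<integral>\<^sup>+ s. indicator {a..b} s * ennreal (1 / sqrt (s - a)) \<partial>lborel) = ennreal (2 * sqrt (b - a))"
proof -
  have "((\<lambda>s. 1 / sqrt (s - a)) has_integral 2 * sqrt (b - a) - 2 * sqrt (a - a)) {a..b}"
  proof (rule fundamental_theorem_of_calculus_interior[OF assms])
    show "continuous_on {a..b} (\<lambda>s. 2 * sqrt (s - a))"
      by (intro continuous_intros)
    fix s assume "s \<in> {a<..<b}"
    then show "((\<lambda>s. 2 * sqrt (s - a)) has_vector_derivative 1 / sqrt (s - a)) (at s)"
      unfolding has_real_derivative_iff_has_vector_derivative[symmetric]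
      by (auto intro!: derivative_eq_intros simp: field_simps)
  qed
  from nn_integral_has_integral_lebesgue[OF _ this] show ?thesis
    by (simp add: ennreal_mult'[symmetric] ennreal_indicator[symmetric])
qed

lemma nn_integral_inverse_sqrt_upper:
  fixes a b :: real
  assumes "a \<le> b"
  shows "(\<integral>\<^sup>+ s. indicator {a..b} s * ennreal (1 / sqrt (b - s)) \<partial>lborel) = ennreal (2 * sqrt (b - a))"
proof -
  have "((\<lambda>s. 1 / sqrt (b - s)) has_integral - 2 * sqrt (b - b) - - 2 * sqrt (b - a)) {a..b}"
  proof (rule fundamental_theorem_of_calculus_interior[OF assms])
    show "continuous_on {a..b} (\<lambda>s. - 2 * sqrt (b - s))"
      by (intro continuous_intros)
    fix s assume "s \<in> {a<..<b}"
    then show "((\<lambda>s. - 2 * sqrt (b - s)) has_vector_derivative 1 / sqrt (b - s)) (at s)"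
      unfolding has_real_derivative_iff_has_vector_derivative[symmetric]
      by (auto intro!: derivative_eq_intros simp: field_simps)
  qed
  from nn_integral_has_integral_lebesgue[OF _ this] show ?thesis
    by (simp add: ennreal_mult'[symmetric] ennreal_indicator[symmetric])
qed

lemma inverse_sqrt_eq_layer_integral:
  fixes p T :: real
  assumes "0 < p" "p \<le> T"
  shows "ennreal (1 / sqrt p) =
    ennreal (1 / sqrt T) + (\<integral>\<^sup>+ l. indicator {p..T} l * ennreal (1 / (2 * l * sqrt l)) \<partial>lborel)"
proof -
  have "((\<lambda>l. 1 / (2 * l * sqrt l)) has_integral - 1 / sqrt T - - 1 / sqrt p) {p..T}"
  proof (rule fundamental_theorem_of_calculus_interior[OF assms(2)])
    show "continuous_on {p..T} (\<lambda>l. - 1 / sqrt l)"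
      using assms by (intro continuous_intros) auto
    fix l assume "l \<in> {p<..<T}"
    then have "0 < l" using assms by auto
    then show "((\<lambda>l. - 1 / sqrt l) has_vector_derivative 1 / (2 * l * sqrt l)) (at l)"
      unfolding has_real_derivative_iff_has_vector_derivative[symmetric]
      by (auto intro!: derivative_eq_intros simp: field_simps)
  qed
  from nn_integral_has_integral_lebesgue[OF _ this]
  have "(\<integral>\<^sup>+ l. indicator {p..T} l * ennreal (1 / (2 * l * sqrt l)) \<partial>lborel) = ennreal (1 / sqrt p - 1 / sqrt T)"
    using assms by (simp add: ennreal_mult'[symmetric] ennreal_indicator[symmetric])
  moreover have "1 / sqrt T \<le> 1 / sqrt p"
    using assms by (simp add: frac_le)
  ultimately show ?thesis
    using assms by (simp flip: ennreal_plus)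
qed

lemma inverse_sqrt_dist_le_layer_integral:
  fixes x y :: "'a::metric_space"
  shows "indicator (ball x T) y * ennreal (1 / sqrt (dist x y))
    \<le> indicator (ball x T) y * ennreal (1 / sqrt T) +
      (\<integral>\<^sup>+ l. indicator {0<..T} l * indicator (cball x l) y * ennreal (1 / (2 * l * sqrt l)) \<partial>lborel)"
proof (cases "y \<in> ball x T \<and> y \<noteq> x")
  case True
  then have "0 < dist x y" "dist x y \<le> T"
    by auto
  moreover have "indicator {0<..T} l * indicator (cball x l) y * ennreal (1 / (2 * l * sqrt l))
      = indicator {dist x y..T} l * ennreal (1 / (2 * l * sqrt l))" for l :: real
    using order.strict_trans2[OF \<open>0 < dist x y\<close>, of l] by (auto simp: indicator_def)
  ultimately show ?thesis
    using True by (simp add: inverse_sqrt_eq_layer_integral[of "dist x y" T])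
qed (auto simp: indicator_def)

lemma nn_integral_cball_layers_le:
  fixes x :: "'a::euclidean_space"
  assumes dim: "DIM('a) = 2" and T: "0 < T"
  shows "(\<integral>\<^sup>+ y. (\<integral>\<^sup>+ l. indicator {0<..T} l * indicator (cball x l) y *
      ennreal (1 / (2 * l * sqrt l)) \<partial>lborel) \<partial>lborel) \<le> ennreal (pi * T * sqrt T / 2)"
proof -
  define w :: "real \<Rightarrow> ennreal" where "w l = indicator {0<..T} l * ennreal (1 / (2 * l * sqrt l))" for l
  define B where "B y l = indicator {0<..T} l * indicator (cball x l) y * ennreal (1 / (2 * l * sqrt l))"
    for y l
  have "case_prod B \<in> borel_measurable (lborel \<Otimes>\<^sub>M lborel)"
    unfolding B_def indicator_def mem_cball by measurable
  from lborel_pair.Fubini'[OF this]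
  have "(\<integral>\<^sup>+ y. (\<integral>\<^sup>+ l. B y l \<partial>lborel) \<partial>lborel) = (\<integral>\<^sup>+ l. (\<integral>\<^sup>+ y. B y l \<partial>lborel) \<partial>lborel)"
    by simp
  also have "\<dots> = (\<integral>\<^sup>+ l. emeasure lborel (cball x l) * w l \<partial>lborel)"
  proof (intro nn_integral_cong)
    fix l :: real
    have "B y l = indicator (cball x l) y * w l" for y
      by (simp add: B_def w_def mult_ac)
    then show "(\<integral>\<^sup>+ y. B y l \<partial>lborel) = emeasure lborel (cball x l) * w l"
      by (simp add: nn_integral_multc borel_measurable_indicator)
  qed
  also have "\<dots> = (\<integral>\<^sup>+ l. ennreal (pi * l\<^sup>2) * w l \<partial>lborel)"
    using dim by (intro nn_integral_cong) (simp add: w_def indicator_def emeasure_cball unit_ball_vol_2)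
  also have "\<dots> \<le> (\<integral>\<^sup>+ l. indicator {0..T} l * ennreal (pi * sqrt T / 2) \<partial>lborel)"
  proof (intro nn_integral_mono)
    fix l :: real
    show "ennreal (pi * l\<^sup>2) * w l \<le> indicator {0..T} l * ennreal (pi * sqrt T / 2)"
    proof (cases "0 < l \<and> l \<le> T")
      case True
      then have "ennreal (pi * l\<^sup>2) * w l = ennreal (pi * sqrt l / 2)"
        by (simp add: w_def ennreal_mult'[symmetric] field_simps power2_eq_square)
      also have "\<dots> \<le> ennreal (pi * sqrt T / 2)"
        using True by (intro ennreal_leI) auto
      finally show ?thesis
        using True by simp
    qed (auto simp: w_def)
  qed
  also have "\<dots> = ennreal (pi * T * sqrt T / 2)"
    using T by (simp add: nn_integral_multc ennreal_mult'[symmetric])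
  finally show ?thesis
    by (simp add: B_def)
qed

lemma nn_integral_ball_inverse_sqrt_dist:
  fixes x :: "'a::euclidean_space"
  assumes dim: "DIM('a) = 2" and T: "0 < T"
  shows "(\<integral>\<^sup>+ y. indicator (ball x T) y * ennreal (1 / sqrt (dist x y)) \<partial>lborel)
    \<le> ennreal (2 * pi * T * sqrt T)"
proof -
  have "(\<integral>\<^sup>+ y. indicator (ball x T) y * ennreal (1 / sqrt (dist x y)) \<partial>lborel)
      \<le> (\<integral>\<^sup>+ y. indicator (ball x T) y * ennreal (1 / sqrt T) \<partial>lborel) +
        (\<integral>\<^sup>+ y. (\<integral>\<^sup>+ l. indicator {0<..T} l * indicator (cball x l) y *
          ennreal (1 / (2 * l * sqrt l)) \<partial>lborel) \<partial>lborel)"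
    unfolding indicator_def mem_ball mem_cball
    by (subst nn_integral_add[symmetric], measurable)
      (intro nn_integral_mono inverse_sqrt_dist_le_layer_integral[unfolded indicator_def mem_ball mem_cball])
  also have "\<dots> \<le> ennreal (pi * T\<^sup>2) * ennreal (1 / sqrt T) + ennreal (pi * T * sqrt T / 2)"
    using T dim nn_integral_cball_layers_le[OF dim T, of x] by (intro add_mono, subst nn_integral_multc)
      (auto simp: emeasure_ball unit_ball_vol_2 intro!: borel_measurable_indicator)
  also have "\<dots> = ennreal (3 / 2 * pi * T * sqrt T)"
    using T by (simp add: ennreal_mult'[symmetric] ennreal_plus[symmetric] field_simps power2_eq_square
        del: ennreal_plus)
  also have "\<dots> \<le> ennreal (2 * pi * T * sqrt T)"
    using T by (intro ennreal_leI) simp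
  finally show ?thesis .
qed

lemma inverse_sqrt_mult_le:
  fixes u v :: real
  assumes "0 < u" "0 < v"
  shows "1 / sqrt (u * v) \<le> 1 / sqrt ((u + v) / 2) * (1 / sqrt u + 1 / sqrt v)"
proof -
  have one_side: "1 / sqrt (u * v) \<le> 1 / sqrt ((u + v) / 2) * (1 / sqrt u)"
    if "0 < u" "u \<le> v" for u v :: real
  proof -
    have "1 / sqrt v \<le> 1 / sqrt ((u + v) / 2)"
      using that by (intro divide_left_mono) auto
    then have "1 / sqrt u * (1 / sqrt v) \<le> 1 / sqrt u * (1 / sqrt ((u + v) / 2))"
      using that by (intro mult_left_mono) auto
    then show ?thesis
      by (simp add: real_sqrt_mult mult.commute)
  qed
  have "1 / sqrt ((u + v) / 2) * (1 / sqrt u) \<le> 1 / sqrt ((u + v) / 2) * (1 / sqrt u + 1 / sqrt v)"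
    "1 / sqrt ((u + v) / 2) * (1 / sqrt v) \<le> 1 / sqrt ((u + v) / 2) * (1 / sqrt u + 1 / sqrt v)"
    using assms by (intro mult_left_mono; simp)+
  with one_side[of u v] one_side[of v u] assms show ?thesis
    by (cases "u \<le> v") (auto simp: ac_simps)
qed

text \<open>With \<open>u = t - p - s\<close> and \<open>v = s - r - q\<close> the left-hand side is, up to the factor
  \<open>(2 * pi)\<^sup>2\<close>, the product of the two planar wave kernels; the right-hand side has only
  integrable singularities in \<open>s\<close>.\<close>
lemma inverse_sqrt_hyperbolic_product_le:
  fixes u v p q :: real
  assumes "0 < p" "0 < q" "0 < u" "0 < v"
  shows "1 / (sqrt ((u + p)\<^sup>2 - p\<^sup>2) * sqrt ((v + q)\<^sup>2 - q\<^sup>2))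
    \<le> 1 / sqrt ((u + v + p + q) * min p q) * (1 / sqrt ((u + v) / 2) * (1 / sqrt u + 1 / sqrt v))"
proof -
  define T m where "T = u + v + p + q" and "m = min p q"
  have "0 < T" "0 < m"
    using assms by (auto simp: T_def m_def)
  have "T * m \<le> (u + 2 * p) * (v + 2 * q)"
  proof -
    have "T \<le> 2 * max (u + 2 * p) (v + 2 * q)" "2 * m \<le> min (u + 2 * p) (v + 2 * q)"
      using assms by (auto simp: T_def m_def max_def min_def)
    then have "T * (2 * m) \<le> 2 * max (u + 2 * p) (v + 2 * q) * min (u + 2 * p) (v + 2 * q)"
      using \<open>0 < T\<close> \<open>0 < m\<close> by (intro mult_mono) auto
    then show ?thesis
      by (auto simp: max_def min_def algebra_simps split: if_splits)
  qed
  moreover have "(u + p)\<^sup>2 - p\<^sup>2 = u * (u + 2 * p)" "(v + q)\<^sup>2 - q\<^sup>2 = v * (v + 2 * q)"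
    by (simp_all add: power2_eq_square algebra_simps)
  ultimately have "sqrt (u * v) * sqrt (T * m) \<le> sqrt ((u + p)\<^sup>2 - p\<^sup>2) * sqrt ((v + q)\<^sup>2 - q\<^sup>2)"
    using assms by (simp add: real_sqrt_mult[symmetric] mult_left_mono mult.assoc mult.left_commute)
  then have "1 / (sqrt ((u + p)\<^sup>2 - p\<^sup>2) * sqrt ((v + q)\<^sup>2 - q\<^sup>2)) \<le> 1 / (sqrt (u * v) * sqrt (T * m))"
    using assms \<open>0 < T\<close> \<open>0 < m\<close> by (intro frac_le) auto
  also have "\<dots> = 1 / sqrt (T * m) * (1 / sqrt (u * v))"
    by simp
  also have "\<dots> \<le> 1 / sqrt (T * m) * (1 / sqrt ((u + v) / 2) * (1 / sqrt u + 1 / sqrt v))"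
    using assms \<open>0 < T\<close> \<open>0 < m\<close> by (intro mult_left_mono inverse_sqrt_mult_le) auto
  finally show ?thesis
    by (simp add: T_def m_def)
qed

lemma nn_integral_inverse_sqrt_hyperbolic_product:
  fixes p q r t :: real
  assumes p: "0 < p" and q: "0 < q"
  shows "(\<integral>\<^sup>+ s. indicator {r + q<..<t - p} s *
      ennreal (1 / (sqrt ((t - s)\<^sup>2 - p\<^sup>2) * sqrt ((s - r)\<^sup>2 - q\<^sup>2))) \<partial>lborel)
    \<le> ennreal (4 * sqrt 2 / sqrt ((t - r) * min p q))"
proof (cases "r + q < t - p")
  case True
  define a b where "a = r + q" and "b = t - p"
  define c where "c = 1 / sqrt ((t - r) * min p q) * (1 / sqrt ((b - a) / 2))"
  have "a < b" "0 \<le> c"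
    using True p q by (auto simp: a_def b_def c_def)
  have pointwise: "indicator {a<..<b} s * ennreal (1 / (sqrt ((t - s)\<^sup>2 - p\<^sup>2) * sqrt ((s - r)\<^sup>2 - q\<^sup>2)))
    \<le> ennreal c * (indicator {a..b} s * ennreal (1 / sqrt (b - s)) + indicator {a..b} s * ennreal (1 / sqrt (s - a)))"
    for s
  proof (cases "s \<in> {a<..<b}")
    case True
    have "b - s + p = t - s" "s - a + q = s - r" "b - s + (s - a) = b - a" "b - a + p + q = t - r"
      by (simp_all add: a_def b_def)
    with inverse_sqrt_hyperbolic_product_le[OF p q, of "b - s" "s - a"] True
    have "1 / (sqrt ((t - s)\<^sup>2 - p\<^sup>2) * sqrt ((s - r)\<^sup>2 - q\<^sup>2))
        \<le> c * (1 / sqrt (b - s) + 1 / sqrt (s - a))"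
      by (simp add: c_def mult.assoc)
    with True \<open>0 \<le> c\<close> show ?thesis
      by (simp add: ennreal_mult'[symmetric] ennreal_plus[symmetric] ennreal_leI del: ennreal_plus)
  qed auto
  have "(\<integral>\<^sup>+ s. indicator {a<..<b} s *
      ennreal (1 / (sqrt ((t - s)\<^sup>2 - p\<^sup>2) * sqrt ((s - r)\<^sup>2 - q\<^sup>2))) \<partial>lborel)
    \<le> ennreal c * ((\<integral>\<^sup>+ s. indicator {a..b} s * ennreal (1 / sqrt (b - s)) \<partial>lborel)
      + (\<integral>\<^sup>+ s. indicator {a..b} s * ennreal (1 / sqrt (s - a)) \<partial>lborel))"
    by (subst nn_integral_add[symmetric], measurable, subst nn_integral_cmult[symmetric], measurable)
      (intro nn_integral_mono pointwise)
  also have "\<dots> = ennreal (c * (4 * sqrt (b - a)))"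
    using \<open>a < b\<close> \<open>0 \<le> c\<close>
    by (simp add: nn_integral_inverse_sqrt_lower nn_integral_inverse_sqrt_upper
        ennreal_mult'[symmetric] ennreal_plus[symmetric] del: ennreal_plus)
  also have "c * (4 * sqrt (b - a)) = 4 * sqrt 2 / sqrt ((t - r) * min p q)"
    using \<open>a < b\<close> by (simp add: c_def real_sqrt_divide field_simps)
  finally show ?thesis
    by (simp add: a_def b_def)
qed simp

lemma borel_measurable_wave_G [measurable]:
  fixes g :: "'b \<Rightarrow> 'a::euclidean_space"
  assumes [measurable]: "f \<in> borel_measurable M" "g \<in> borel_measurable M"
  shows "(\<lambda>x. wave_G (f x) (g x)) \<in> borel_measurable M"
  unfolding wave_G_def by (cases "DIM('a) = 1"; cases "DIM('a) = 2"; simp; measurable)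

lemma wave_G_nonneg: "0 \<le> wave_G t x"
  using norm_ge_zero[of x] power_strict_mono[of "norm x" t 2] by (auto simp: wave_G_def)

lemma wave_G_eq_0: "t \<le> norm x \<Longrightarrow> wave_G t x = 0"
  by (simp add: wave_G_def)

lemma wave_G_dim2:
  fixes x :: "'a::euclidean_space"
  assumes "DIM('a) = 2" "norm x < t"
  shows "wave_G t x = 1 / (2 * pi) * (1 / sqrt (t\<^sup>2 - (norm x)\<^sup>2))"
  using assms by (simp add: wave_G_def)

lemma wave_G_dim2_ge:
  fixes x :: "'a::euclidean_space"
  assumes "DIM('a) = 2" "norm x < t"
  shows "1 / (2 * pi * t) \<le> wave_G t x"
proof -
  have "0 < t"
    using assms(2) norm_ge_zero[of x] by linarith
  have "0 < t\<^sup>2 - (norm x)\<^sup>2"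
    using assms(2) by (simp add: power_strict_mono)
  moreover have "sqrt (t\<^sup>2 - (norm x)\<^sup>2) \<le> t"
    using \<open>0 < t\<close> by (intro real_le_lsqrt) auto
  ultimately have "1 / (2 * pi * t) \<le> 1 / (2 * pi * sqrt (t\<^sup>2 - (norm x)\<^sup>2))"
    by (intro frac_le) auto
  then show ?thesis
    using assms by (simp add: wave_G_dim2)
qed

lemma four_sqrt_two_le_two_pi_squared: "4 * sqrt 2 \<le> (2 * pi)\<^sup>2"
proof -
  have "sqrt 2 \<le> 2"
    by (rule real_le_lsqrt) auto
  moreover have "9 \<le> pi * pi"
    using mult_mono[OF less_imp_le[OF pi_gt3] less_imp_le[OF pi_gt3]] by simp
  ultimately show ?thesis
    by (simp add: power2_eq_square)
qed

lemma nn_integral_wave_G2_product_time_le: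
  fixes x y z :: "'a::euclidean_space"
  assumes dim: "DIM('a) = 2" and "y \<noteq> x" "y \<noteq> z"
  shows "(\<integral>\<^sup>+ s. indicator {r..t} s * ennreal (wave_G (t - s) (x - y) * wave_G (s - r) (y - z)) \<partial>lborel)
    \<le> ennreal (1 / sqrt (t - r)) * (indicator (ball x (t - r)) y * ennreal (1 / sqrt (dist x y))
        + indicator (ball z (t - r)) y * ennreal (1 / sqrt (dist z y)))"
proof -
  define p q where "p = dist x y" and "q = dist z y"
  have "0 < p" "0 < q"
    using assms by (simp_all add: p_def q_def)
  have norms: "norm (x - y) = p" "norm (y - z) = q"
    by (simp_all add: p_def q_def dist_norm norm_minus_commute)
  have pointwise: "indicator {r..t} s * ennreal (wave_G (t - s) (x - y) * wave_G (s - r) (y - z))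
    \<le> ennreal ((1 / (2 * pi))\<^sup>2) * (indicator {r + q<..<t - p} s *
        ennreal (1 / (sqrt ((t - s)\<^sup>2 - p\<^sup>2) * sqrt ((s - r)\<^sup>2 - q\<^sup>2))))" for s
    using dim by (auto simp: wave_G_def norms indicator_def power2_eq_square ennreal_mult'[symmetric] mult_ac)
  show ?thesis
  proof (cases "p + q < t - r")
    case True
    have "(\<integral>\<^sup>+ s. indicator {r..t} s * ennreal (wave_G (t - s) (x - y) * wave_G (s - r) (y - z)) \<partial>lborel)
      \<le> ennreal ((1 / (2 * pi))\<^sup>2) * (\<integral>\<^sup>+ s. indicator {r + q<..<t - p} s *
        ennreal (1 / (sqrt ((t - s)\<^sup>2 - p\<^sup>2) * sqrt ((s - r)\<^sup>2 - q\<^sup>2))) \<partial>lborel)"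
      by (subst nn_integral_cmult[symmetric], measurable) (intro nn_integral_mono pointwise)
    also have "\<dots> \<le> ennreal ((1 / (2 * pi))\<^sup>2) * ennreal (4 * sqrt 2 / sqrt ((t - r) * min p q))"
      using \<open>0 < p\<close> \<open>0 < q\<close> by (intro mult_left_mono nn_integral_inverse_sqrt_hyperbolic_product) auto
    also have "\<dots> \<le> ennreal (1 / sqrt (t - r) * (1 / sqrt (min p q)))"
    proof -
      have "(1 / (2 * pi))\<^sup>2 * (4 * sqrt 2) \<le> 1"
        using four_sqrt_two_le_two_pi_squared by (simp add: power_one_over field_simps)
      then show ?thesis
        using True \<open>0 < p\<close> \<open>0 < q\<close>
        by (simp add: ennreal_mult'[symmetric] real_sqrt_mult divide_right_mono)
    qed
    also have "\<dots> \<le> ennreal (1 / sqrt (t - r) * (1 / sqrt p + 1 / sqrt q))"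
      using True \<open>0 < p\<close> \<open>0 < q\<close>
      by (intro ennreal_leI mult_left_mono) (auto simp: min_def)
    also have "\<dots> = ennreal (1 / sqrt (t - r)) * (indicator (ball x (t - r)) y * ennreal (1 / sqrt (dist x y))
        + indicator (ball z (t - r)) y * ennreal (1 / sqrt (dist z y)))"
    proof -
      have "p < t - r" "q < t - r" "r < t"
        using True \<open>0 < p\<close> \<open>0 < q\<close> by linarith+
      then have "y \<in> ball x (t - r)" "y \<in> ball z (t - r)"
        by (simp_all add: p_def q_def)
      with \<open>r < t\<close> \<open>0 < p\<close> \<open>0 < q\<close> show ?thesis
        by (subst ennreal_mult') (simp_all add: p_def q_def ennreal_plus[symmetric] del: ennreal_plus)
    qed
    finally show ?thesis .
  next
    case False
    then have "{r + q<..<t - p} = {}"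
      by auto
    then have "(\<integral>\<^sup>+ s. indicator {r..t} s * ennreal (wave_G (t - s) (x - y) * wave_G (s - r) (y - z)) \<partial>lborel) = 0"
      using nn_integral_mono[OF pointwise, of lborel] by simp
    then show ?thesis
      by simp
  qed
qed

definition wave_G_conv :: "real \<Rightarrow> real \<Rightarrow> 'a::euclidean_space \<Rightarrow> 'a \<Rightarrow> ennreal" where
  "wave_G_conv r t x z = (\<integral>\<^sup>+ s. indicator {r..t} s *
     (\<integral>\<^sup>+ y. ennreal (wave_G (t - s) (x - y) * wave_G (s - r) (y - z)) \<partial>lborel) \<partial>lborel)"

lemma wave_G_conv_eq_0:
  assumes "t - r \<le> norm (x - z)"
  shows "wave_G_conv r t x z = 0"
proof -
  have "wave_G (t - s) (x - y) * wave_G (s - r) (y - z) = 0" for s y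
  proof (cases "norm (x - y) < t - s")
    case True
    have "norm (x - z) \<le> norm (x - y) + norm (y - z)"
      using norm_triangle_ineq[of "x - y" "y - z"] by simp
    with True assms have "s - r \<le> norm (y - z)"
      by linarith
    then show ?thesis
      by (simp add: wave_G_eq_0)
  qed (simp add: wave_G_eq_0)
  then show ?thesis
    by (simp only: wave_G_conv_def ennreal_0 nn_integral_const mult_zero_left mult_zero_right)
qed

lemma wave_G_conv_dim1_le:
  fixes x z :: "'a::euclidean_space"
  assumes dim: "DIM('a) = 1" and "r \<le> t" and "norm (x - z) < t - r"
  shows "wave_G_conv r t x z \<le> ennreal ((t - r)\<^sup>2 * wave_G (t - r) (x - z))"
proof -
  have inner: "(\<integral>\<^sup>+ y. ennreal (wave_G (t - s) (x - y) * wave_G (s - r) (y - z)) \<partial>lborel)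
      \<le> ennreal ((t - r) / 2)" if "s \<in> {r..t}" for s
  proof -
    have "(\<integral>\<^sup>+ y. ennreal (wave_G (t - s) (x - y) * wave_G (s - r) (y - z)) \<partial>lborel)
        \<le> (\<integral>\<^sup>+ y. ennreal (1 / 4) * indicator (ball x (t - r)) y \<partial>lborel)"
      using that dim by (intro nn_integral_mono) (auto simp: wave_G_def dist_norm indicator_def)
    also have "\<dots> = ennreal ((t - r) / 2)"
      using assms by (subst nn_integral_cmult)
        (auto simp: emeasure_ball ennreal_mult'[symmetric] intro!: borel_measurable_indicator)
    finally show ?thesis .
  qed
  have "wave_G_conv r t x z \<le> (\<integral>\<^sup>+ s. indicator {r..t} s * ennreal ((t - r) / 2) \<partial>lborel)"
    unfolding wave_G_conv_def
    by (intro nn_integral_mono) (simp add: inner indicator_def)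
  also have "\<dots> = ennreal ((t - r)\<^sup>2 * wave_G (t - r) (x - z))"
    using assms by (simp add: nn_integral_multc ennreal_mult'[symmetric] wave_G_def power2_eq_square)
  finally show ?thesis .
qed

lemma wave_G_conv_dim2_le:
  fixes x z :: "'a::euclidean_space"
  assumes dim: "DIM('a) = 2" and "r < t"
  shows "wave_G_conv r t x z \<le> ennreal (4 * pi * (t - r))"
proof -
  define T where "T = t - r"
  have "0 < T"
    using assms by (simp add: T_def)
  define f where "f s y = indicator {r..t} s * ennreal (wave_G (t - s) (x - y) * wave_G (s - r) (y - z))"
    for s y
  define g where "g c y = indicator (ball c T) y * ennreal (1 / sqrt (dist c y))" for c y :: 'a
  have [measurable]: "g c \<in> borel_measurable lborel" for c
    unfolding g_def indicator_def mem_ball by measurable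
  have "wave_G_conv r t x z = (\<integral>\<^sup>+ s. (\<integral>\<^sup>+ y. f s y \<partial>lborel) \<partial>lborel)"
    unfolding wave_G_conv_def f_def by (intro nn_integral_cong nn_integral_cmult[symmetric]) measurable
  also have "\<dots> = (\<integral>\<^sup>+ y. (\<integral>\<^sup>+ s. f s y \<partial>lborel) \<partial>lborel)"
    by (rule lborel_pair.Fubini') (simp add: f_def)
  also have "\<dots> \<le> (\<integral>\<^sup>+ y. ennreal (1 / sqrt T) * (g x y + g z y) \<partial>lborel)"
  proof (rule nn_integral_mono_AE)
    show "AE y in lborel. (\<integral>\<^sup>+ s. f s y \<partial>lborel) \<le> ennreal (1 / sqrt T) * (g x y + g z y)"
      using AE_lborel_singleton[of x] AE_lborel_singleton[of z]
      by eventually_elim (auto simp: f_def g_def T_def intro!: nn_integral_wave_G2_product_time_le dim)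
  qed
  also have "\<dots> = ennreal (1 / sqrt T) * ((\<integral>\<^sup>+ y. g x y \<partial>lborel) + (\<integral>\<^sup>+ y. g z y \<partial>lborel))"
    by (simp add: nn_integral_cmult nn_integral_add)
  also have "\<dots> \<le> ennreal (1 / sqrt T) * (ennreal (2 * pi * T * sqrt T) + ennreal (2 * pi * T * sqrt T))"
    unfolding g_def using dim \<open>0 < T\<close>
    by (intro mult_left_mono add_mono nn_integral_ball_inverse_sqrt_dist) auto
  also have "\<dots> = ennreal (4 * pi * T)"
    using \<open>0 < T\<close>
    by (simp add: ennreal_mult'[symmetric] ennreal_plus[symmetric] field_simps del: ennreal_plus)
  finally show ?thesis
    by (simp add: T_def)
qed

lemma wave_G_conv_le:
  fixes x z :: "'a::euclidean_space"
  assumes dim: "DIM('a) = 1 \<or> DIM('a) = 2" and "r < t"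
  shows "wave_G_conv r t x z \<le> ennreal (8 * pi\<^sup>2 * (t - r)\<^sup>2 * wave_G (t - r) (x - z))"
proof (cases "norm (x - z) < t - r")
  case inside: True
  show ?thesis
  proof (cases "DIM('a) = 1")
    case True
    have "1 \<le> pi\<^sup>2"
      using pi_gt3 by (intro one_le_power) linarith
    have "wave_G_conv r t x z \<le> ennreal ((t - r)\<^sup>2 * wave_G (t - r) (x - z))"
      using wave_G_conv_dim1_le[OF True] inside \<open>r < t\<close> by simp
    also have "\<dots> \<le> ennreal (8 * pi\<^sup>2 * (t - r)\<^sup>2 * wave_G (t - r) (x - z))"
      using mult_right_mono[of 1 "8 * pi\<^sup>2" "(t - r)\<^sup>2 * wave_G (t - r) (x - z)"] \<open>1 \<le> pi\<^sup>2\<close>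
      by (intro ennreal_leI) (simp add: wave_G_nonneg mult.assoc)
    finally show ?thesis .
  next
    case False
    with dim have "DIM('a) = 2"
      by simp
    have "wave_G_conv r t x z \<le> ennreal (4 * pi * (t - r))"
      using \<open>DIM('a) = 2\<close> \<open>r < t\<close> by (rule wave_G_conv_dim2_le)
    also have "4 * pi * (t - r) = 8 * pi\<^sup>2 * (t - r)\<^sup>2 * (1 / (2 * pi * (t - r)))"
      using \<open>r < t\<close> by (simp add: power2_eq_square field_simps)
    also have "\<dots> \<le> 8 * pi\<^sup>2 * (t - r)\<^sup>2 * wave_G (t - r) (x - z)"
      using wave_G_dim2_ge[OF \<open>DIM('a) = 2\<close> inside] by (intro mult_left_mono) auto
    finally show ?thesis
      by (simp add: ennreal_leI)
  qed
qed (simp add: wave_G_conv_eq_0)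

theorem lemmaC2:
  assumes "DIM('a::euclidean_space) = 1 \<or> DIM('a) = 2"
  shows "\<exists>C>0. \<forall>r t (x::'a) z. 0 < r \<and> r < t \<longrightarrow>
           (\<integral>\<^sup>+ s. indicator {r..t} s *
              (\<integral>\<^sup>+ y. ennreal (wave_G (t - s) (x - y) * wave_G (s - r) (y - z)) \<partial>lborel) \<partial>lborel)
           \<le> ennreal (C * t\<^sup>2 * wave_G (t - r) (x - z))"
  unfolding wave_G_conv_def[symmetric]
proof (intro exI[of _ "8 * pi\<^sup>2"] conjI allI impI)
  fix r t :: real and x z :: 'a
  assume "0 < r \<and> r < t"
  then have "wave_G_conv r t x z \<le> ennreal (8 * pi\<^sup>2 * (t - r)\<^sup>2 * wave_G (t - r) (x - z))"
    by (intro wave_G_conv_le assms) simp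
  also have "\<dots> \<le> ennreal (8 * pi\<^sup>2 * t\<^sup>2 * wave_G (t - r) (x - z))"
    using \<open>0 < r \<and> r < t\<close>
    by (intro ennreal_leI mult_right_mono mult_left_mono power_mono wave_G_nonneg) auto
  finally show "wave_G_conv r t x z \<le> ennreal (8 * pi\<^sup>2 * t\<^sup>2 * wave_G (t - r) (x - z))" .
qed simp

end
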